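(* Let $W$ be $\{0,1\}$-valued, $x\in\mathbb X$, $\preceq$ a total order on $\{X\Subset\mathbb X\mid x\in X\}$, and for each $e\in\mathfrak h(x)$ a total order (also $\preceq$) on $e'=e\setminus\{x\}$. Let $e\in\mathfrak h(x)$, $x'\in e'$, and $y\in\mathbb X$ such that $\{y\}\notin\mathfrak h_e/e'_{\prec x'}$. Then \[ \deg_{\mathfrak h_e/e'_{\prec x'}}(y)\le\deg_{\mathfrak h}(y), \] and if additionally $x\neq y$ or $\{x\}\notin\mathfrak h$, then also $\{y\}\notin\mathfrak h$.
   Context: $\mathbb X$ is a finite or countably infinite set; $e\Subset\mathbb X$ means finite subset. $W:\{X\Subset\mathbb X\}\to\{0,1\}$ and $\mathfrak h=\{e\Subset\mathbb X\mid W(e)=0\}$. For a set $\mathfrak g$ of finite subsets of $\mathbb X$ and $y\in\mathbb X$, $\mathfrak g(y)=\{e\in\mathfrak g\mid y\in e\}$ and $\deg_{\mathfrak g}(y)=|\mathfrak g(y)|\in\{0,1,\dots\}\cup\{\infty\}$. For a set $\mathfrak g$ of finite subsets and $B\Subset\mathbb X$, define $\mathfrak g/B=\{e\setminus B\mid e\in\mathfrak g\}\cup\{\{y\}\mid y\in B\}$ (this is the set of $e$ with $W_{\mathfrak g}(e\mid B)=0$ for the hard-core interaction $W_{\mathfrak g}=\mathbf 1_{\{\cdot\notin\mathfrak g\}}$ and the conditional interaction $W(X\mid B)=\prod_{C\subset B}W(X\cup C)$ if $X\cap B=\varnothing$, $0$ if $X=\{y\}$ with $y\in B$, $1$ otherwise).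 For $e\in\mathfrak h(x)$ let \[ \mathfrak h_e=\{b\setminus\{x\}\mid b\in\mathfrak h(x),\ b\prec e\}\cup\big(\mathfrak h\setminus(\mathfrak h(x)\setminus\{e\})\big), \] where $\prec$ is the strict part of $\preceq$; and for $x'\in e'$, $e'_{\prec x'}=\{x''\in e'\mid x''\prec x'\}$. *)

theory Defs
  imports Main "HOL-Library.Extended_Nat" "HOL-Library.Countable"
begin

definition hset :: "('a set \<Rightarrow> nat) \<Rightarrow> 'a set set" where
  "hset W = {e. finite e \<and> W e = 0}"

definition edges_at :: "'a set set \<Rightarrow> 'a \<Rightarrow> 'a set set" where
  "edges_at g y = {e \<in> g. y \<in> e}"

definition deg :: "'a set set \<Rightarrow> 'a \<Rightarrow> enat" where
  "deg g y = (if finite (edges_at g y) then enat (card (edges_at g y)) else \<infinity>)"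

definition hquot :: "'a set set \<Rightarrow> 'a set \<Rightarrow> 'a set set" where
  "hquot g B = {e - B | e. e \<in> g} \<union> {{y} | y. y \<in> B}"

definition h_e :: "'a set set \<Rightarrow> 'a \<Rightarrow> 'a set rel \<Rightarrow> 'a set \<Rightarrow> 'a set set" where
  "h_e h x R e = {b - {x} | b. b \<in> edges_at h x \<and> (b, e) \<in> R \<and> b \<noteq> e}
                 \<union> (h - (edges_at h x - {e}))"

definition below :: "'a set \<Rightarrow> 'a rel \<Rightarrow> 'a \<Rightarrow> 'a set" where
  "below e' r x' = {x'' \<in> e'. (x'', x') \<in> r \<and> x'' \<noteq> x'}"

end

theory Submission
  imports Defs
begin

text \<open>Every edge of \<open>h_e / B\<close> through a vertex \<open>y \<notin> B\<close> arises from an edge of \<open>h\<close>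
  through \<open>y\<close> by deleting \<open>B\<close> and possibly \<open>x\<close>, so the degree can only drop; and a
  singleton \<open>{y}\<close> of \<open>h\<close> with \<open>y \<noteq> x\<close> survives both operations. Neither argument needs
  the orders or the 0/1-valuedness of \<open>W\<close>.\<close>

lemma deg_le_if_subset_image:
  assumes "edges_at A y \<subseteq> f ` edges_at G y"
  shows "deg A y \<le> deg G y"
proof (cases "finite (edges_at G y)")
  case True
  then have "finite (edges_at A y)"
    using assms finite_surj by blast
  moreover have "card (edges_at A y) \<le> card (edges_at G y)"
    using True assms by (meson card_image_le card_mono finite_imageI le_trans)
  ultimately show ?thesis
    using True by (simp add: deg_def)
next
  case False
  then show ?thesis by (simp add: deg_def)
qed

lemma singleton_in_hquot: "{y} \<in> g \<Longrightarrow> {y} \<in> hquot g B"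
  unfolding hquot_def by (cases "y \<in> B") auto

lemma notin_if_singleton_notin_hquot: "{y} \<notin> hquot g B \<Longrightarrow> y \<notin> B"
  unfolding hquot_def by blast

lemma edges_at_hquot:
  assumes "y \<notin> B"
  shows "edges_at (hquot g B) y = (\<lambda>c. c - B) ` edges_at g y"
  using assms unfolding edges_at_def hquot_def by auto

lemma deg_hquot_le: "y \<notin> B \<Longrightarrow> deg (hquot g B) y \<le> deg g y"
  by (rule deg_le_if_subset_image[where f = "\<lambda>c. c - B"]) (simp add: edges_at_hquot)

lemma edges_at_h_e_subset:
  "edges_at (h_e g x R e) y
     \<subseteq> (\<lambda>c. if c \<in> edges_at g x - {e} then c - {x} else c) ` edges_at g y"
  unfolding h_e_def edges_at_def by (auto simp: image_iff)

lemma deg_h_e_le: "deg (h_e g x R e) y \<le> deg g y"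
  by (rule deg_le_if_subset_image[OF edges_at_h_e_subset])

lemma singleton_in_h_e: "{y} \<in> g \<Longrightarrow> x \<noteq> y \<Longrightarrow> {y} \<in> h_e g x R e"
  unfolding h_e_def edges_at_def by simp

theorem corollary5p4:
  fixes W :: "'a::countable set \<Rightarrow> nat"
    and x x' y :: 'a
    and R :: "'a set rel"
    and Ord :: "'a set \<Rightarrow> 'a rel"
    and e :: "'a set"
  assumes W01: "\<forall>X. finite X \<longrightarrow> W X \<in> {0, 1}"
    and R_total: "linear_order_on {X. finite X \<and> x \<in> X} R"
    and Ord_total: "\<forall>b \<in> edges_at (hset W) x. linear_order_on (b - {x}) (Ord b)"
    and e_in: "e \<in> edges_at (hset W) x"
    and x'_in: "x' \<in> e - {x}"
    and y_not: "{y} \<notin> hquot (h_e (hset W) x R e) (below (e - {x}) (Ord e) x')"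
  shows "deg (hquot (h_e (hset W) x R e) (below (e - {x}) (Ord e) x')) y \<le> deg (hset W) y
         \<and> ((x \<noteq> y \<or> {x} \<notin> hset W) \<longrightarrow> {y} \<notin> hset W)"
proof
  have y_notin_below: "y \<notin> below (e - {x}) (Ord e) x'"
    using y_not by (rule notin_if_singleton_notin_hquot)
  show "deg (hquot (h_e (hset W) x R e) (below (e - {x}) (Ord e) x')) y \<le> deg (hset W) y"
    by (rule order_trans[OF deg_hquot_le[OF y_notin_below] deg_h_e_le])
  show "(x \<noteq> y \<or> {x} \<notin> hset W) \<longrightarrow> {y} \<notin> hset W"
  proof (intro impI notI)
    assume "x \<noteq> y \<or> {x} \<notin> hset W" and y_edge: "{y} \<in> hset W"
    then have "x \<noteq> y" by blast
    with y_edge have "{y} \<in> hquot (h_e (hset W) x R e) (below (e - {x}) (Ord e) x')"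
      by (intro singleton_in_hquot singleton_in_h_e)
    with y_not show False by contradiction
  qed
qed

end
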